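(* Let $m>1$ be a multiperfect number, i.e. $m\mid\sigma(m)$. Write $m=\prod_{i=1}^{s} p_i^{e_i}$ with distinct primes $p_i$ and exponents $e_i\ge 1$, and let $L=\operatorname{lcm}(e_1+1,\dots,e_s+1)$. If $L$ is prime, then $m=6$.
   Context: $\sigma(n)=\sum_{d\mid n} d$ denotes the sum-of-divisors function. *)

theory Defs
  imports "HOL-Computational_Algebra.Primes"
begin

definition divisor_sum :: "nat \<Rightarrow> nat" where
  "divisor_sum n = (\<Sum>d \<in> {d. d dvd n}. d)"

end

theory Submission
  imports Defs "HOL-Number_Theory.Number_Theory"
begin

text \<open>Since \<open>L = q\<close> is prime, every exponent of \<open>m\<close> equals \<open>q - 1\<close>, so \<open>\<sigma>(m)\<close> is the product
  of the sums \<open>1 + p + \<dots> + p^(q-1)\<close>. For \<open>q = 2\<close> the product of the primes of \<open>m\<close> divides the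
  product of the \<open>p + 1\<close>, which forces the primes \<open>2\<close> and \<open>3\<close>.
  For odd \<open>q\<close>, a prime divisor of \<open>1 + p + \<dots> + p^(q-1)\<close> is \<open>q\<close> or \<open>1\<close> modulo \<open>q\<close>, and \<open>\<sigma>(m)\<close> is
  odd; so the \<open>r\<close> primes of \<open>m\<close> other than \<open>q\<close> are \<open>1\<close> modulo \<open>2q\<close>, each contributing a factor
  below \<open>1 + 1/(2q)\<close> to \<open>\<sigma>(m)/m\<close>, while \<open>q\<close> itself contributes less than \<open>3/2\<close>. But \<open>\<sigma>(m)/m\<close> is an
  integer whose prime factors are all at least \<open>q\<close>, and each of the \<open>r\<close> primes puts a factor \<open>q\<close>
  into \<open>\<sigma>(m)\<close>: this makes \<open>\<sigma>(m)/m \<ge> q^r\<close> if \<open>q\<close> does not divide \<open>m\<close>, and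
  \<open>\<sigma>(m)/m \<ge> max q (q^(r-q+1))\<close> otherwise, too large in both cases.\<close>

lemma coprime_prime_power_prod:
  fixes q :: nat
  assumes "prime q" "\<forall>p\<in>Q. prime p" "q \<notin> Q"
  shows "coprime (q ^ n) (\<Prod>p\<in>Q. p ^ e p)"
proof -
  have "coprime q (p ^ e p)" if "p \<in> Q" for p
    using assms that by (metis coprime_power_right_iff primes_coprime)
  then show ?thesis by (simp add: prod_coprime_right)
qed

lemma Suc_le_of_cong_one:
  fixes p n :: nat
  assumes "[p = 1] (mod n)" "1 < p"
  shows "n + 1 \<le> p"
proof -
  have "n dvd p - 1" using assms cong_altdef_nat[of 1 p n] by simp
  then have "n \<le> p - 1" using assms(2) by (simp add: dvd_imp_le)
  then show ?thesis using assms(2) by simp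
qed

lemma divisor_sum_mult:
  fixes a b :: nat
  assumes "coprime a b"
  shows "divisor_sum (a * b) = divisor_sum a * divisor_sum b"
proof -
  let ?f = "\<lambda>(x, y). x * (y::nat)"
  let ?D = "\<lambda>n::nat. {d. d dvd n}"
  have image: "?D (a * b) = ?f ` (?D a \<times> ?D b)"
  proof
    show "?D (a * b) \<subseteq> ?f ` (?D a \<times> ?D b)"
    proof
      fix d assume "d \<in> ?D (a * b)"
      then obtain x y where "d = x * y" "x dvd a" "y dvd b"
        using division_decomp by blast
      then show "d \<in> ?f ` (?D a \<times> ?D b)" by force
    qed
  qed (clarsimp simp: mult_dvd_mono)
  have inj: "inj_on ?f (?D a \<times> ?D b)"
  proof (rule inj_onI, clarsimp)
    fix x y u v :: nat
    assume dvd: "x dvd a" "y dvd b" "u dvd a" "v dvd b" and eq: "x * y = u * v"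
    have gcd_eq: "gcd (s * t) c = s" if "s dvd c" "coprime c t" for s t c :: nat
      using gcd_mult_left_right_cancel[OF that(2)] that(1) by (simp add: gcd_nat.absorb1)
    have "coprime a y" "coprime a v"
      using dvd assms by (meson coprime_divisors dvd_refl)+
    moreover have "coprime b x" "coprime b u"
      using dvd assms by (meson coprime_commute coprime_divisors dvd_refl)+
    ultimately have "gcd (x * y) a = x" "gcd (u * v) a = u" "gcd (y * x) b = y" "gcd (v * u) b = v"
      using dvd gcd_eq by blast+
    then show "x = u \<and> y = v" using eq by (metis mult.commute)
  qed
  have "divisor_sum (a * b) = (\<Sum>(x, y)\<in>?D a \<times> ?D b. x * y)"
    unfolding divisor_sum_def image using sum.reindex[OF inj, of id] by simp
  also have "\<dots> = divisor_sum a * divisor_sum b"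
    unfolding divisor_sum_def by (simp add: sum.cartesian_product sum_product)
  finally show ?thesis .
qed

definition geom_sum :: "nat \<Rightarrow> nat \<Rightarrow> nat" where
  "geom_sum p n = (\<Sum>i<n. p ^ i)"

lemma divisor_sum_prime_power:
  assumes "prime p"
  shows "divisor_sum (p ^ k) = geom_sum p (Suc k)"
proof -
  have "{d. d dvd p ^ k} = (\<lambda>i. p ^ i) ` {..<Suc k}"
    using divides_primepow_nat[OF assms] by (auto simp: less_Suc_eq_le)
  moreover have "inj_on (\<lambda>i. p ^ i) {..<Suc k}"
    using prime_gt_1_nat[OF assms] by (auto intro!: inj_onI simp: power_inject_exp)
  ultimately show ?thesis
    unfolding divisor_sum_def geom_sum_def by (simp add: sum.reindex)
qed

lemma divisor_sum_prod_prime_powers: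
  assumes "finite P" "\<forall>p\<in>P. prime p"
  shows "divisor_sum (\<Prod>p\<in>P. p ^ e p) = (\<Prod>p\<in>P. divisor_sum (p ^ e p))"
  using assms
proof (induction P rule: finite_induct)
  case empty
  have "{d::nat. d dvd 1} = {1}" by auto
  then show ?case by (simp add: divisor_sum_def)
next
  case (insert x F)
  then have "coprime (x ^ e x) (\<Prod>p\<in>F. p ^ e p)"
    by (intro coprime_prime_power_prod) auto
  then show ?case using insert by (simp add: divisor_sum_mult)
qed

lemma divisor_sum_eq_prod_geom_sum:
  assumes "m > 0"
  shows "divisor_sum m = (\<Prod>p\<in>prime_factors m. geom_sum p (multiplicity p m + 1))"
proof -
  have "divisor_sum m = divisor_sum (\<Prod>p\<in>prime_factors m. p ^ multiplicity p m)"
    using prime_factorization_nat[OF assms] by simp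
  also have "\<dots> = (\<Prod>p\<in>prime_factors m. divisor_sum (p ^ multiplicity p m))"
    by (intro divisor_sum_prod_prime_powers) auto
  also have "\<dots> = (\<Prod>p\<in>prime_factors m. geom_sum p (multiplicity p m + 1))"
    by (intro prod.cong) (auto intro: divisor_sum_prime_power in_prime_factors_imp_prime)
  finally show ?thesis .
qed

lemma factorization_equal_exponents:
  assumes "m > 0" "\<forall>p\<in>prime_factors m. multiplicity p m = e"
  shows "m = (\<Prod>p\<in>prime_factors m. p ^ e)"
    and "divisor_sum m = (\<Prod>p\<in>prime_factors m. geom_sum p (e + 1))"
  using prime_factorization_nat[OF assms(1)] divisor_sum_eq_prod_geom_sum[OF assms(1)] assms(2)
  by (simp_all cong: prod.cong)

lemma eq_Lcm_if_prime:
  fixes A :: "nat set"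
  assumes "prime (Lcm A)" "a \<in> A" "a \<noteq> 1"
  shows "a = Lcm A"
  using dvd_Lcm[OF assms(2)] assms(1,3) prime_nat_iff by blast

lemma multiplicity_eq_of_prime_Lcm:
  assumes "prime (Lcm ((\<lambda>p. multiplicity p m + 1) ` prime_factors m))" "p \<in> prime_factors m"
  shows "multiplicity p m + 1 = Lcm ((\<lambda>p. multiplicity p m + 1) ` prime_factors m)"
proof (rule eq_Lcm_if_prime[OF assms(1)])
  show "multiplicity p m + 1 \<in> (\<lambda>p. multiplicity p m + 1) ` prime_factors m"
    using assms(2) by blast
  show "multiplicity p m + 1 \<noteq> 1"
    using assms(2) prime_factors_multiplicity[of m] by simp
qed

lemma geom_sum_mult_diff_one:
  assumes "1 \<le> p"
  shows "geom_sum p n * (p - 1) + 1 = p ^ n"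
proof (induction n)
  case 0
  then show ?case by (simp add: geom_sum_def)
next
  case (Suc n)
  have "geom_sum p (Suc n) * (p - 1) + 1 = (geom_sum p n * (p - 1) + 1) + p ^ n * (p - 1)"
    by (simp add: geom_sum_def algebra_simps)
  also have "\<dots> = p ^ Suc n"
    using Suc assms by (cases p) (auto simp: algebra_simps)
  finally show ?case .
qed

lemma odd_geom_sum:
  assumes "odd n"
  shows "odd (geom_sum p n)"
proof (cases "even p")
  case True
  then have "{i\<in>{..<n}. odd (p ^ i)} = {0}" using assms by (auto simp: odd_pos)
  then show ?thesis unfolding geom_sum_def by (simp add: even_sum_iff)
next
  case False
  then have "{i\<in>{..<n}. odd (p ^ i)} = {..<n}" by auto
  then show ?thesis unfolding geom_sum_def using assms by (simp add: even_sum_iff)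
qed

lemma cong_geom_sum_one:
  assumes "[p = 1] (mod r)"
  shows "[geom_sum p n = n] (mod r)"
proof -
  have "[(\<Sum>i<n. p ^ i) = (\<Sum>i<n. 1 ^ i)] (mod r)"
    by (intro cong_sum cong_pow assms)
  then show ?thesis by (simp add: geom_sum_def)
qed

text \<open>The order of \<open>p\<close> modulo \<open>r\<close> divides the prime \<open>q\<close>: order \<open>1\<close> forces \<open>r = q\<close>,
  order \<open>q\<close> forces \<open>q\<close> to divide \<open>r - 1\<close> by Fermat's little theorem.\<close>
lemma prime_dvd_geom_sum:
  assumes "prime q" "prime r" "1 \<le> p" "r dvd geom_sum p q"
  shows "r = q \<or> [r = 1] (mod q)"
proof -
  have "[geom_sum p q * (p - 1) + 1 = 0 * (p - 1) + 1] (mod r)"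
    using assms(4) by (intro cong_add cong_mult) (simp_all add: cong_0_iff)
  then have pow: "[p ^ q = 1] (mod r)"
    using geom_sum_mult_diff_one[OF assms(3)] by simp
  then have "coprime (p ^ q) r"
    by (metis cong_imp_coprime cong_sym coprime_1_left)
  then have "\<not> r dvd p"
    using assms(1,2) prime_gt_0_nat by (auto simp: coprime_power_left_iff prime_imp_coprime_nat)
  have "ord r p dvd q" using pow ord_divides by blast
  then have "ord r p = 1 \<or> ord r p = q" using assms(1) prime_nat_iff by blast
  then show ?thesis
  proof
    assume "ord r p = 1"
    then have "[p = 1] (mod r)" using ord[of p r] by simp
    then have "r dvd q" using assms(4) cong_geom_sum_one cong_dvd_iff by blast
    then show ?thesis using assms(1,2) by (simp add: primes_dvd_imp_eq)
  next
    assume "ord r p = q"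
    then have "q dvd r - 1"
      using fermat_theorem[OF assms(2) \<open>\<not> r dvd p\<close>] ord_divides by metis
    then show ?thesis
      using prime_gt_0_nat[OF assms(2)] by (simp add: cong_altdef_nat cong_sym_eq)
  qed
qed

lemma power_less_geom_sum:
  assumes "2 \<le> n"
  shows "p ^ (n - 1) < geom_sum p n"
proof -
  have "{0, n - 1} \<subseteq> {..<n}" "0 \<noteq> n - 1" using assms by auto
  then have "(\<Sum>i\<in>{0, n - 1}. p ^ i) \<le> (\<Sum>i<n. p ^ i)" by (intro sum_mono2) auto
  then show ?thesis using \<open>0 \<noteq> n - 1\<close> by (simp add: geom_sum_def)
qed

lemma mult_geom_sum_less:
  assumes "1 \<le> n" "0 < c" "c + 1 \<le> p"
  shows "c * geom_sum p n < (c + 1) * p ^ (n - 1)"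
proof -
  have "p ^ n = p * p ^ (n - 1)"
    using assms(1) by (cases n) auto
  have "c * p = c * (p - 1) + c" using assms(3) by (cases p) auto
  also have "\<dots> \<le> (c + 1) * (p - 1)" using assms(3) by simp
  finally have "c * p \<le> (c + 1) * (p - 1)" .
  have "(c * geom_sum p n) * (p - 1) < c * (geom_sum p n * (p - 1) + 1)"
    using assms(2) by (simp add: algebra_simps)
  also have "\<dots> = (c * p) * p ^ (n - 1)"
    using geom_sum_mult_diff_one assms \<open>p ^ n = p * p ^ (n - 1)\<close> by simp
  also have "\<dots> \<le> ((c + 1) * (p - 1)) * p ^ (n - 1)"
    using \<open>c * p \<le> (c + 1) * (p - 1)\<close> by (rule mult_le_mono1)
  also have "\<dots> = ((c + 1) * p ^ (n - 1)) * (p - 1)"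
    by (simp only: ac_simps)
  finally show ?thesis by (rule mult_less_cancel2[THEN iffD1, THEN conjunct2])
qed

text \<open>The largest prime \<open>M\<close> must divide \<open>p + 1\<close> for some smaller prime \<open>p\<close>, so \<open>M = p + 1\<close>,
  which only happens for \<open>p = 2\<close>, \<open>M = 3\<close>.\<close>
lemma prod_dvd_prod_Suc_primes:
  fixes P :: "nat set"
  assumes "finite P" "P \<noteq> {}" "\<forall>p\<in>P. prime p"
    and "(\<Prod>p\<in>P. p) dvd (\<Prod>p\<in>P. p + 1)"
  shows "P = {2, 3}"
proof -
  define M where "M = Max P"
  have "M \<in> P" "\<forall>p\<in>P. p \<le> M" using assms(1,2) unfolding M_def by simp_all
  then have "prime M" using assms(3) by simp
  have "M dvd (\<Prod>p\<in>P. p + 1)"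
    using dvd_prodI[OF assms(1) \<open>M \<in> P\<close>, of "\<lambda>p. p"] assms(4) by (rule dvd_trans)
  then obtain p where "p \<in> P" "M dvd p + 1"
    using prime_dvd_prod_iff[OF assms(1) \<open>prime M\<close>, of "\<lambda>p. p + 1"] by blast
  moreover have "p \<noteq> M"
  proof
    assume "p = M"
    then have "M dvd 1" using \<open>M dvd p + 1\<close> dvd_add_right_iff[of M M 1] by simp
    then show False using \<open>prime M\<close> by simp
  qed
  ultimately have "p < M"
    using \<open>\<forall>p\<in>P. p \<le> M\<close> by (simp add: le_neq_implies_less)
  moreover have "M \<le> p + 1"
    using \<open>M dvd p + 1\<close> by (simp add: dvd_imp_le)
  ultimately have "M = p + 1" by simp
  have "prime p" using \<open>p \<in> P\<close> assms(3) by simp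
  have "p = 2"
  proof (rule ccontr)
    assume "p \<noteq> 2"
    moreover have "2 \<le> p" using \<open>prime p\<close> prime_ge_2_nat by blast
    ultimately have "2 < p" by simp
    then have "odd p" using \<open>prime p\<close> prime_odd_nat by blast
    then have "even M" "2 < M" using \<open>M = p + 1\<close> \<open>2 < p\<close> by simp_all
    then show False using \<open>prime M\<close> prime_odd_nat by auto
  qed
  have "P \<subseteq> {2, 3}"
  proof
    fix x assume "x \<in> P"
    then have "2 \<le> x" "x \<le> 3"
      using assms(3) prime_ge_2_nat \<open>\<forall>p\<in>P. p \<le> M\<close> \<open>M = p + 1\<close> \<open>p = 2\<close> by auto
    then show "x \<in> {2, 3}" by auto
  qed
  then show ?thesis using \<open>p \<in> P\<close> \<open>M \<in> P\<close> \<open>M = p + 1\<close> \<open>p = 2\<close> by auto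
qed

lemma prime_dvd_prod_geom_sum:
  assumes "finite P" "\<forall>p\<in>P. 1 \<le> p" "prime q" "prime r"
    and "r dvd (\<Prod>p\<in>P. geom_sum p q)"
  shows "r = q \<or> [r = 1] (mod q)"
proof -
  obtain p where "p \<in> P" "r dvd geom_sum p q"
    using prime_dvd_prod_iff[OF assms(1,4), of "\<lambda>p. geom_sum p q"] assms(5) by blast
  then show ?thesis using prime_dvd_geom_sum assms(2-4) by blast
qed

lemma prime_power_dvd_prod_geom_sum:
  assumes "finite Q" "\<forall>p\<in>Q. [p = 1] (mod q)"
  shows "q ^ card Q dvd (\<Prod>p\<in>Q. geom_sum p q)"
proof -
  have "q dvd geom_sum p q" if "p \<in> Q" for p
  proof -
    have "[geom_sum p q = q] (mod q)" using assms(2) that by (simp add: cong_geom_sum_one)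
    then show ?thesis by (simp add: cong_dvd_iff)
  qed
  then have "(\<Prod>p\<in>Q. q) dvd (\<Prod>p\<in>Q. geom_sum p q)" by (rule prod_dvd_prod)
  then show ?thesis by simp
qed

lemma prod_geom_sum_le:
  assumes "finite Q" "1 \<le> n" "0 < c" "\<forall>p\<in>Q. c + 1 \<le> p"
  shows "c ^ card Q * (\<Prod>p\<in>Q. geom_sum p n) \<le> (c + 1) ^ card Q * (\<Prod>p\<in>Q. p ^ (n - 1))"
proof -
  have "c * geom_sum p n \<le> (c + 1) * p ^ (n - 1)" if "p \<in> Q" for p
    using mult_geom_sum_less[OF assms(2,3)] assms(4) that by (simp add: less_imp_le)
  then have "(\<Prod>p\<in>Q. c * geom_sum p n) \<le> (\<Prod>p\<in>Q. (c + 1) * p ^ (n - 1))"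
    by (intro prod_mono) simp
  then show ?thesis by (simp only: prod.distrib prod_constant)
qed

lemma quotient_prod_geom_sum_ge:
  assumes "finite P" "P \<noteq> {}" "\<forall>p\<in>P. 1 \<le> p" "prime q"
    and k: "(\<Prod>p\<in>P. geom_sum p q) = (\<Prod>p\<in>P. p ^ (q - 1)) * k"
  shows "q \<le> k"
proof -
  have "2 \<le> q" using assms(4) prime_ge_2_nat by blast
  then have less: "p ^ (q - 1) < geom_sum p q" for p by (rule power_less_geom_sum)
  obtain i where "i \<in> P" using assms(2) by blast
  have "(\<Prod>p\<in>P. p ^ (q - 1)) < (\<Prod>p\<in>P. geom_sum p q)"
    using \<open>i \<in> P\<close> less assms(1)
  proof (rule prod_mono_strict)
    show "0 \<le> p ^ (q - 1) \<and> p ^ (q - 1) \<le> geom_sum p q" for p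
      using less[of p] by simp
    show "0 < geom_sum p q" for p
      using less[of p] by simp
  qed
  then have "k \<noteq> 1" "0 < k" using k by (auto intro: gr0I)
  then obtain r where r: "prime r" "r dvd k" using prime_factor_nat by blast
  then have "r dvd (\<Prod>p\<in>P. geom_sum p q)" using k by simp
  then have "r = q \<or> [r = 1] (mod q)"
    using prime_dvd_prod_geom_sum assms(1,3,4) r(1) by blast
  then have "q \<le> r" using Suc_le_of_cong_one prime_gt_1_nat[OF r(1)] by fastforce
  also have "r \<le> k" using r(2) \<open>0 < k\<close> by (rule dvd_imp_le)
  finally show ?thesis .
qed

lemma prime_cases_of_dvd_prod_geom_sum:
  assumes "finite P" "\<forall>p\<in>P. prime p" "prime q" "odd q"
    and dvd: "(\<Prod>p\<in>P. p ^ (q - 1)) dvd (\<Prod>p\<in>P. geom_sum p q)" and "p \<in> P"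
  shows "p = q \<or> [p = 1] (mod 2 * q)"
proof -
  let ?S = "\<Prod>p\<in>P. geom_sum p q"
  have "2 < q" using assms(3,4) prime_ge_2_nat[of q] by (cases "q = 2") auto
  have "p dvd p ^ (q - 1)" using \<open>2 < q\<close> by simp
  also have "\<dots> dvd (\<Prod>p\<in>P. p ^ (q - 1))"
    using dvd_prodI[OF assms(1) \<open>p \<in> P\<close>, of "\<lambda>p. p ^ (q - 1)"] by simp
  also note dvd
  finally have "p dvd ?S" .
  have "\<forall>p\<in>P. 1 \<le> p" using assms(2) prime_ge_1_nat by blast
  then have "p = q \<or> [p = 1] (mod q)"
    using prime_dvd_prod_geom_sum[OF assms(1) _ assms(3)] \<open>p dvd ?S\<close> assms(2,6) by blast
  moreover have "odd ?S"
    using even_prod_iff[OF assms(1), of "\<lambda>p. geom_sum p q"] odd_geom_sum[OF assms(4)] by simp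
  then have "odd p" using \<open>p dvd ?S\<close> by (auto intro: dvd_trans)
  then have "[p = 1] (mod 2)" by (simp add: cong_def odd_iff_mod_2_eq_one)
  moreover have "coprime 2 q" using assms(4) by simp
  ultimately show ?thesis using coprime_cong_mult_nat by blast
qed

lemma not_dvd_prod_geom_sum_if_notin:
  assumes "finite P" "P \<noteq> {}" "\<forall>p\<in>P. prime p" "prime q" "q \<notin> P"
    and large: "\<forall>p\<in>P. [p = 1] (mod q) \<and> 2 * q + 1 \<le> p"
  shows "\<not> (\<Prod>p\<in>P. p ^ (q - 1)) dvd (\<Prod>p\<in>P. geom_sum p q)"
proof
  define m where "m = (\<Prod>p\<in>P. p ^ (q - 1))"
  define S where "S = (\<Prod>p\<in>P. geom_sum p q)"
  define r where "r = card P"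
  assume "(\<Prod>p\<in>P. p ^ (q - 1)) dvd (\<Prod>p\<in>P. geom_sum p q)"
  then obtain k where k: "S = m * k" unfolding m_def S_def by (rule dvdE)
  have "0 < r" using assms(1,2) unfolding r_def by (simp add: card_gt_0_iff)
  have "0 < m" unfolding m_def using assms(3) prime_gt_0_nat by (intro prod_pos) simp
  have "q ^ r dvd S"
    unfolding S_def r_def using assms(1) large by (intro prime_power_dvd_prod_geom_sum) auto
  moreover have "coprime (q ^ r) m"
    unfolding m_def using assms(4,3,5) by (rule coprime_prime_power_prod)
  ultimately have "q ^ r dvd k" using k coprime_dvd_mult_right_iff by metis
  moreover have "0 < S"
    unfolding S_def using power_less_geom_sum prime_ge_2_nat[OF assms(4)]
    by (intro prod_pos) (metis gr0I not_less_zero)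
  then have "0 < k" using k by simp
  ultimately have "q ^ r \<le> k" by (rule dvd_imp_le)
  have "((2 * q) ^ r * q ^ r) * m \<le> (2 * q) ^ r * S"
    using \<open>q ^ r \<le> k\<close> k by (simp add: ac_simps)
  also have "\<dots> \<le> (2 * q + 1) ^ r * m"
    unfolding S_def m_def r_def
    using assms(1) large prime_gt_0_nat[OF assms(4)] by (intro prod_geom_sum_le) auto
  finally have "(2 * q * q) ^ r \<le> (2 * q + 1) ^ r"
    using \<open>0 < m\<close> by (simp add: power_mult_distrib)
  then have "2 * q * q \<le> 2 * q + 1" using \<open>0 < r\<close> by simp
  moreover have "2 * q * 2 \<le> 2 * q * q" using prime_ge_2_nat[OF assms(4)] by (rule mult_le_mono2)
  ultimately show False using prime_ge_2_nat[OF assms(4)] by linarith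
qed

lemma Suc_power_mult_diff_le: "(N + 1) ^ n * (N - n) \<le> (N::nat) ^ (n + 1)"
proof (induction n)
  case 0
  then show ?case by simp
next
  case (Suc n)
  have "(N + 1) ^ Suc n * (N - Suc n) * (N - n) = ((N + 1) ^ n * (N - n)) * ((N + 1) * (N - Suc n))"
    by (simp only: power_Suc ac_simps)
  also have "\<dots> \<le> N ^ (n + 1) * ((N + 1) * (N - Suc n))"
    using Suc.IH by simp
  also have "\<dots> \<le> N ^ (n + 1) * (N * (N - n))"
    by (intro mult_le_mono2) (simp add: algebra_simps diff_mult_distrib2)
  also have "\<dots> = N ^ (Suc n + 1) * (N - n)"
    by (simp add: ac_simps)
  finally show ?case
    by (cases "n < N") simp_all
qed

text \<open>Equivalently \<open>(3/2) (1 + 1/(2q))^r \<le> k\<close>.\<close>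
lemma three_mult_power_le:
  fixes q k r :: nat
  assumes "3 \<le> q" "q \<le> k" "q \<le> r \<Longrightarrow> q ^ (r - q + 1) \<le> k"
  shows "3 * (2 * q + 1) ^ r \<le> 2 * k * (2 * q) ^ r"
proof (cases "r < q")
  case True
  have "3 * (2 * q + 1) ^ r \<le> (2 * q - r) * (2 * q + 1) ^ r"
    using True assms(1) by (intro mult_le_mono1) simp
  also have "\<dots> \<le> (2 * q) ^ (r + 1)"
    using Suc_power_mult_diff_le[of "2 * q" r] by (simp only: mult.commute)
  also have "\<dots> \<le> 2 * k * (2 * q) ^ r"
    using assms(2) by simp
  finally show ?thesis .
next
  case False
  have "3 * (2 * q + 1) ^ (q + j) \<le> 2 * q ^ (j + 1) * (2 * q) ^ (q + j)" for j
  proof (induction j)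
    case 0
    have "3 * (2 * q + 1) ^ q \<le> q * (2 * q + 1) ^ q"
      using assms(1) by (rule mult_le_mono1)
    also have "\<dots> \<le> (2 * q) ^ (q + 1)"
      using Suc_power_mult_diff_le[of "2 * q" q] by (simp add: mult.commute)
    finally show ?case by simp
  next
    case (Suc j)
    have "2 * q + 1 \<le> q * (2 * q)"
      using mult_le_mono1[OF assms(1), of "2 * q"] assms(1) by linarith
    have "3 * (2 * q + 1) ^ (q + Suc j) = (3 * (2 * q + 1) ^ (q + j)) * (2 * q + 1)"
      by simp
    also have "\<dots> \<le> (2 * q ^ (j + 1) * (2 * q) ^ (q + j)) * (q * (2 * q))"
      using Suc.IH \<open>2 * q + 1 \<le> q * (2 * q)\<close> by (rule mult_le_mono)
    also have "\<dots> = 2 * q ^ (Suc j + 1) * (2 * q) ^ (q + Suc j)"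
      by (simp add: algebra_simps)
    finally show ?case .
  qed
  from this[of "r - q"] False have "3 * (2 * q + 1) ^ r \<le> 2 * q ^ (r - q + 1) * (2 * q) ^ r"
    by simp
  also have "\<dots> \<le> 2 * k * (2 * q) ^ r"
    using assms False by simp
  finally show ?thesis .
qed

lemma prime_power_dvd_quotient_if_mem:
  assumes "finite P" "\<forall>p\<in>P. prime p" "prime q" "q \<in> P"
    and "\<forall>p\<in>P - {q}. [p = 1] (mod q)"
    and k: "(\<Prod>p\<in>P. geom_sum p q) = (\<Prod>p\<in>P. p ^ (q - 1)) * k"
  shows "q ^ card (P - {q}) dvd q ^ (q - 1) * k"
proof -
  define Q where "Q = P - {q}"
  have "finite Q" "\<forall>p\<in>Q. prime p" "q \<notin> Q" using assms(1,2) by (auto simp: Q_def)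
  have "q ^ card Q dvd (\<Prod>p\<in>Q. geom_sum p q)"
    using \<open>finite Q\<close> assms(5) by (intro prime_power_dvd_prod_geom_sum) (auto simp: Q_def)
  moreover have "geom_sum q q * (\<Prod>p\<in>Q. geom_sum p q) = (\<Prod>p\<in>Q. p ^ (q - 1)) * (q ^ (q - 1) * k)"
    using k prod.remove[OF assms(1,4), of "\<lambda>p. geom_sum p q"]
      prod.remove[OF assms(1,4), of "\<lambda>p. p ^ (q - 1)"] by (simp add: Q_def ac_simps)
  ultimately have "q ^ card Q dvd (\<Prod>p\<in>Q. p ^ (q - 1)) * (q ^ (q - 1) * k)"
    using dvd_mult[of "q ^ card Q" _ "geom_sum q q"] by metis
  moreover have "coprime (q ^ card Q) (\<Prod>p\<in>Q. p ^ (q - 1))"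
    using assms(3) \<open>\<forall>p\<in>Q. prime p\<close> \<open>q \<notin> Q\<close> by (rule coprime_prime_power_prod)
  ultimately show ?thesis by (simp add: coprime_dvd_mult_right_iff Q_def)
qed

lemma not_dvd_prod_geom_sum_if_mem:
  assumes "finite P" "\<forall>p\<in>P. prime p" "prime q" "3 \<le> q" "q \<in> P"
    and large: "\<forall>p\<in>P - {q}. [p = 1] (mod q) \<and> 2 * q + 1 \<le> p"
  shows "\<not> (\<Prod>p\<in>P. p ^ (q - 1)) dvd (\<Prod>p\<in>P. geom_sum p q)"
proof
  define Q where "Q = P - {q}"
  define r where "r = card Q"
  define m' where "m' = (\<Prod>p\<in>Q. p ^ (q - 1))"
  define S' where "S' = (\<Prod>p\<in>Q. geom_sum p q)"
  assume "(\<Prod>p\<in>P. p ^ (q - 1)) dvd (\<Prod>p\<in>P. geom_sum p q)"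
  then obtain k where k: "(\<Prod>p\<in>P. geom_sum p q) = (\<Prod>p\<in>P. p ^ (q - 1)) * k" by (rule dvdE)
  have m: "(\<Prod>p\<in>P. p ^ (q - 1)) = q ^ (q - 1) * m'"
    unfolding m'_def Q_def using prod.remove[OF assms(1,5)] by simp
  have S: "(\<Prod>p\<in>P. geom_sum p q) = geom_sum q q * S'"
    unfolding S'_def Q_def using prod.remove[OF assms(1,5)] by simp
  have "finite Q" "\<forall>p\<in>Q. prime p" using assms(1,2) by (auto simp: Q_def)
  have "0 < m'" unfolding m'_def using \<open>\<forall>p\<in>Q. prime p\<close> prime_gt_0_nat by (intro prod_pos) simp
  have "q \<le> k"
    using assms(1,2,3,5) k prime_ge_1_nat by (intro quotient_prod_geom_sum_ge) auto
  have "q ^ (r - q + 1) \<le> k" if "q \<le> r"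
  proof -
    have "q ^ (q - 1) * q ^ (r - q + 1) dvd q ^ (q - 1) * k"
      using prime_power_dvd_quotient_if_mem[OF assms(1-3,5) _ k] large power_add[of q "q - 1" "r - q + 1"]
        that assms(4) by (simp add: r_def Q_def)
    then have "q ^ (r - q + 1) dvd k" using assms(4) by simp
    then show ?thesis using \<open>q \<le> k\<close> assms(4) by (simp add: dvd_imp_le)
  qed
  then have "3 * (2 * q + 1) ^ r \<le> 2 * k * (2 * q) ^ r"
    using three_mult_power_le[OF assms(4) \<open>q \<le> k\<close>] by blast
  moreover have "(2 * k * (2 * q) ^ r) * (q ^ (q - 1) * m') < (3 * (2 * q + 1) ^ r) * (q ^ (q - 1) * m')"
  proof -
    \<comment> \<open>\<open>\<sigma>(q^(q-1)) < (3/2) q^(q-1)\<close>, and \<open>\<sigma>(p^(q-1)) < (1 + 1/(2q)) p^(q-1)\<close> for the other primes\<close>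
    have "(2 * k * (2 * q) ^ r) * (q ^ (q - 1) * m') = 2 * geom_sum q q * ((2 * q) ^ r * S')"
      using k m S by (simp add: ac_simps)
    also have "\<dots> \<le> 2 * geom_sum q q * ((2 * q + 1) ^ r * m')"
      unfolding S'_def m'_def r_def using \<open>finite Q\<close> large assms(4)
      by (intro mult_le_mono2 prod_geom_sum_le) (auto simp: Q_def)
    also have "\<dots> < 3 * q ^ (q - 1) * ((2 * q + 1) ^ r * m')"
      using mult_geom_sum_less[of q 2 q] assms(4) \<open>0 < m'\<close> by (intro mult_less_mono1) simp_all
    finally show ?thesis by (simp only: ac_simps)
  qed
  ultimately show False by (metis leD mult_le_mono1)
qed

lemma not_dvd_prod_geom_sum_odd_prime:
  assumes "finite P" "P \<noteq> {}" "\<forall>p\<in>P. prime p" "prime q" "odd q"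
  shows "\<not> (\<Prod>p\<in>P. p ^ (q - 1)) dvd (\<Prod>p\<in>P. geom_sum p q)"
proof
  assume dvd: "(\<Prod>p\<in>P. p ^ (q - 1)) dvd (\<Prod>p\<in>P. geom_sum p q)"
  have "3 \<le> q" using assms(4,5) prime_ge_2_nat[of q] by (cases "q = 2") auto
  have "[p = 1] (mod q) \<and> 2 * q + 1 \<le> p" if "p \<in> P" "p \<noteq> q" for p
  proof -
    have "[p = 1] (mod 2 * q)"
      using prime_cases_of_dvd_prod_geom_sum[OF assms(1,3-5) dvd \<open>p \<in> P\<close>] \<open>p \<noteq> q\<close> by blast
    then show ?thesis
      using Suc_le_of_cong_one cong_dvd_modulus_nat[of p 1 "2 * q" q] prime_gt_1_nat assms(3) that(1)
      by auto
  qed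
  then show False
    using not_dvd_prod_geom_sum_if_notin[OF assms(1-4)] not_dvd_prod_geom_sum_if_mem[OF assms(1,3,4) \<open>3 \<le> q\<close>]
      dvd by (cases "q \<in> P") auto
qed

theorem mainTheorem2:
  fixes m :: nat
  assumes "m > 1"
    and "m dvd divisor_sum m"
    and "prime (Lcm ((\<lambda>p. multiplicity p m + 1) ` prime_factors m))"
  shows "m = 6"
proof -
  define P where "P = prime_factors m"
  define q where "q = Lcm ((\<lambda>p. multiplicity p m + 1) ` prime_factors m)"
  have "prime q" using assms(3) by (simp add: q_def)
  then have "2 \<le> q" by (rule prime_ge_2_nat)
  have "\<forall>p\<in>P. multiplicity p m = q - 1"
    using multiplicity_eq_of_prime_Lcm[OF assms(3), folded q_def] by (force simp: P_def)
  then have m: "m = (\<Prod>p\<in>P. p ^ (q - 1))" and "divisor_sum m = (\<Prod>p\<in>P. geom_sum p q)"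
    using factorization_equal_exponents[of m "q - 1"] assms(1) \<open>2 \<le> q\<close> by (simp_all add: P_def)
  then have dvd: "(\<Prod>p\<in>P. p ^ (q - 1)) dvd (\<Prod>p\<in>P. geom_sum p q)" using assms(2) by simp
  have P: "finite P" "P \<noteq> {}" "\<forall>p\<in>P. prime p" using m assms(1) by (auto simp: P_def)
  show ?thesis
  proof (cases "q = 2")
    case True
    have "geom_sum p 2 = p + 1" for p by (simp add: geom_sum_def numeral_2_eq_2)
    then have "P = {2, 3}" using prod_dvd_prod_Suc_primes[OF P] dvd True by simp
    then show ?thesis using m True by simp
  next
    case False
    then have "odd q" using \<open>prime q\<close> \<open>2 \<le> q\<close> prime_odd_nat by simp
    then show ?thesis using not_dvd_prod_geom_sum_odd_prime[OF P \<open>prime q\<close>] dvd by blast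
  qed
qed

end
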